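(* Let $G=(V,E)$ be a finite strongly connected directed graph, let $\mathcal H=\mathbb C^{V}$ with orthonormal basis $\{|v\rangle : v\in V\}$, and let $\mathcal L=\{L_{(v,w)}=c_{(v,w)}|w\rangle\langle v| : (v,w)\in E\}$ for arbitrary nonzero constants $c_{(v,w)}\in\mathbb C\setminus\{0\}$. Then for an arbitrary Hermitian operator $H$ on $\mathcal H$, the GKSL evolution $$\frac{d}{dt}\varrho=\mathcal M[\varrho]=-\mathrm i[H,\varrho]+\sum_{L\in\mathcal L}\Big(L\varrho L^\dagger-\tfrac12\{L^\dagger L,\varrho\}\Big)$$ is relaxing, and its unique stationary state has full rank.
   Context: A density matrix $\varrho$ is a stationary state if $\mathcal M[\varrho]=0$. The evolution is called relaxing if it has a unique stationary state (density matrix). $\{A,B\}=AB+BA$ is the anticommutator. A digraph is strongly connected if for any $v,w\in V$ there is a directed path from $v$ to $w$. *)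

theory Defs
  imports "HOL-Analysis.Analysis"
begin

text \<open>Operators on H = C^V are matrices complex^'v^'v indexed by the finite vertex type 'v;
  the basis vector |v> is the standard basis vector at v.\<close>

definition adj :: "complex^'v^'v \<Rightarrow> complex^'v^'v" where
  "adj A = (\<chi> i j. cnj (A $ j $ i))"

definition hermitian :: "complex^'v^'v \<Rightarrow> bool" where
  "hermitian A \<longleftrightarrow> adj A = A"

definition positive_semidef :: "complex^'v::finite^'v \<Rightarrow> bool" where
  "positive_semidef A \<longleftrightarrow> hermitian A \<and>
     (\<forall>x::complex^'v. 0 \<le> Re (\<Sum>i\<in>UNIV. \<Sum>j\<in>UNIV. cnj (x $ i) * A $ i $ j * x $ j))"

definition density_matrix :: "complex^'v::finite^'v \<Rightarrow> bool" where
  "density_matrix \<rho> \<longleftrightarrow> positive_semidef \<rho> \<and> trace \<rho> = 1"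

definition ketbra :: "'v \<Rightarrow> 'v \<Rightarrow> complex^'v^'v" where
  "ketbra w v = (\<chi> i j. if i = w \<and> j = v then 1 else 0)"

definition mscale :: "complex \<Rightarrow> complex^'v^'v \<Rightarrow> complex^'v^'v" where
  "mscale a A = (\<chi> i j. a * A $ i $ j)"

definition commutator :: "complex^'v::finite^'v \<Rightarrow> complex^'v^'v \<Rightarrow> complex^'v^'v" where
  "commutator A B = A ** B - B ** A"

definition anticommutator :: "complex^'v::finite^'v \<Rightarrow> complex^'v^'v \<Rightarrow> complex^'v^'v" where
  "anticommutator A B = A ** B + B ** A"

definition gksl :: "complex^'v::finite^'v \<Rightarrow> 'i set \<Rightarrow> ('i \<Rightarrow> complex^'v^'v)
                     \<Rightarrow> complex^'v^'v \<Rightarrow> complex^'v^'v" where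
  "gksl H I Ls \<rho> = mscale (- \<i>) (commutator H \<rho>) +
     (\<Sum>k\<in>I. Ls k ** \<rho> ** adj (Ls k) - mscale (1/2) (anticommutator (adj (Ls k) ** Ls k) \<rho>))"

definition strongly_connected :: "('v \<times> 'v) set \<Rightarrow> bool" where
  "strongly_connected E \<longleftrightarrow> (\<forall>v w. (v, w) \<in> E\<^sup>*)"

end

theory Submission
  imports Defs
begin

text \<open>Write \<Gamma> for the diagonal matrix of escape rates \<gamma> v = \<Sum> |c (v, w)|^2 over the edges
  leaving v.  Since L* L = |c|^2 |v\<rangle>\<langle>v| and L X L* = |c|^2 X v v |w\<rangle>\<langle>w| for L = c |w\<rangle>\<langle>v|, the
  generator splits as M X = D X + J (diag X) with the decay part D X = -i[H, X] - (\<Gamma> X + X \<Gamma>) / 2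
  and a diagonal inflow J that only sees the diagonal of X.  If every \<gamma> v > 0, then D is
  invertible and obeys a maximum principle (D X = -Q with Q positive semidefinite forces X to be
  positive semidefinite); this turns a Hermitian kernel element of the trace-annihilating M into a
  stationary state, and makes suitable differences of stationary states positive semidefinite.
  Strong connectivity propagates a vanishing diagonal entry of a positive semidefinite stationary
  state to all vertices, which gives uniqueness and full rank.  A single vertex, where \<gamma> may
  vanish, is checked directly.\<close>

section \<open>Positive semidefinite matrices\<close>

definition cinner :: "complex^'n::finite \<Rightarrow> complex^'n \<Rightarrow> complex" where
  "cinner x y = (\<Sum>i\<in>UNIV. cnj (x$i) * y$i)"

definition quad_form :: "complex^'n::finite^'n \<Rightarrow> complex^'n \<Rightarrow> complex" where
  "quad_form A x = cinner x (A *v x)"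

lemma quad_form_eq_sum: "quad_form A x = (\<Sum>i\<in>UNIV. \<Sum>j\<in>UNIV. cnj (x $ i) * A $ i $ j * x $ j)"
  by (simp add: quad_form_def cinner_def matrix_vector_mult_def sum_distrib_left mult.assoc)

lemma positive_semidef_iff: "positive_semidef A \<longleftrightarrow> hermitian A \<and> (\<forall>x. 0 \<le> Re (quad_form A x))"
  unfolding positive_semidef_def quad_form_eq_sum ..

lemma cinner_adj: "cinner x (A *v y) = cinner (adj A *v x) y"
  unfolding cinner_def matrix_vector_mult_def adj_def
  by (simp add: sum_distrib_left sum_distrib_right mult_ac) (rule sum.swap)

lemma cnj_cinner: "cnj (cinner x y) = cinner y x"
  by (simp add: cinner_def mult.commute)

lemma cinner_add_left: "cinner (x + y) z = cinner x z + cinner y z"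
  by (simp add: cinner_def distrib_right sum.distrib)
lemma cinner_add_right: "cinner x (y + z) = cinner x y + cinner x z"
  by (simp add: cinner_def distrib_left sum.distrib)
lemma cinner_diff_right: "cinner x (y - z) = cinner x y - cinner x z"
  by (simp add: cinner_def right_diff_distrib sum_subtractf)
lemma cinner_scale_left: "cinner (a *s x) y = cnj a * cinner x y"
  by (simp add: cinner_def sum_distrib_left mult_ac)
lemma cinner_scale_right: "cinner x (a *s y) = a * cinner x y"
  by (simp add: cinner_def sum_distrib_left mult_ac)

lemma cinner_self: "cinner x x = of_real (norm x ^ 2)"
proof -
  have "norm x ^ 2 = (\<Sum>i\<in>UNIV. cmod (x$i) ^ 2)"
    by (simp add: norm_vec_def L2_set_def sum_nonneg)
  then show ?thesis
    unfolding cinner_def of_real_sum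
    by (simp add: complex_norm_square mult.commute del: of_real_power)
qed

lemma hermitian_entry: "hermitian A \<Longrightarrow> cnj (A $ i $ j) = A $ j $ i"
  unfolding hermitian_def adj_def by (metis vec_lambda_beta)

lemma of_real_Re_diag_hermitian: "hermitian A \<Longrightarrow> of_real (Re (A $ v $ v)) = A $ v $ v"
  using hermitian_entry[of A v v] by (metis Reals_cnj_iff complex_is_Real_iff of_real_Re)

lemma cinner_hermitian: "hermitian A \<Longrightarrow> cinner x (A *v y) = cinner (A *v x) y"
  unfolding hermitian_def by (metis cinner_adj)

lemma Im_quad_form_hermitian: "hermitian A \<Longrightarrow> Im (quad_form A x) = 0"
  unfolding quad_form_def by (metis cinner_hermitian cnj_cinner Reals_cnj_iff complex_is_Real_iff)

lemma quad_form_scale: "quad_form A (a *s x) = cnj a * a * quad_form A x"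
  by (simp add: quad_form_def vector_scalar_commute cinner_scale_left cinner_scale_right)

lemma mscale_mv: "mscale a A *v x = a *s (A *v x)"
  by (simp add: mscale_def matrix_vector_mult_def vector_scalar_mult_def vec_eq_iff
      sum_distrib_left mult.assoc)

lemma commutator_mv: "commutator A B *v x = A *v (B *v x) - B *v (A *v x)"
  by (simp add: commutator_def matrix_vector_mul_assoc algebra_simps)

lemma anticommutator_mv: "anticommutator A B *v x = A *v (B *v x) + B *v (A *v x)"
  by (simp add: anticommutator_def matrix_vector_mul_assoc algebra_simps)

lemma mscale_entry: "mscale a A $ i $ j = a * A $ i $ j"
  by (simp add: mscale_def)

lemma mscale_1: "mscale 1 A = A"
  by (simp add: mscale_def vec_eq_iff)

lemma scaleR_eq_mscale: "r *\<^sub>R (A::complex^'n::finite^'n) = mscale (of_real r) A"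
proof -
  have "(r *\<^sub>R A) $ i $ j = of_real r * A $ i $ j" for i j
    using scaleR_conv_of_real[of r "A $ i $ j"] by simp
  then show ?thesis by (simp add: vec_eq_iff mscale_entry)
qed

lemma trace_uminus: "trace (- A :: complex^'n^'n) = - trace A"
  by (simp add: trace_def sum_negf)

lemma trace_mscale: "trace (mscale a A) = a * trace A"
  by (simp add: trace_def mscale_entry sum_distrib_left)

lemma quad_form_uminus: "quad_form (- A) x = - quad_form A x"
proof -
  have "(- A) *v x = - (A *v x)" by (simp add: vec_eq_iff matrix_vector_mult_def sum_negf)
  then show ?thesis by (simp add: quad_form_def cinner_def sum_negf)
qed

lemma mscale_zero [simp]: "mscale a 0 = 0"
  by (simp add: mscale_def vec_eq_iff)

lemma quad_form_mscale: "quad_form (mscale a A) x = a * quad_form A x"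
  by (simp add: quad_form_def mscale_mv cinner_scale_right)

lemma adj_entry: "adj A $ i $ j = cnj (A $ j $ i)"
  by (simp add: adj_def)

lemma adj_diff: "adj (A - B) = adj A - adj B"
  by (simp add: adj_def vec_eq_iff)
lemma adj_add: "adj (A + B) = adj A + adj B"
  by (simp add: adj_def vec_eq_iff)
lemma adj_uminus: "adj (- A) = - adj A"
  by (simp add: adj_def vec_eq_iff)
lemma adj_mscale: "adj (mscale a A) = mscale (cnj a) (adj A)"
  by (simp add: adj_def mscale_def vec_eq_iff)
lemma adj_adj: "adj (adj A) = A"
  by (simp add: adj_def vec_eq_iff)
lemma adj_mat: "adj (mat a :: complex^'n^'n) = mat (cnj a)"
  by (simp add: adj_def mat_def vec_eq_iff)

lemma quadratic_nonneg_imp_linear_coeff_0: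
  fixes a b :: real
  assumes "\<And>t. 0 \<le> a * t + b * t\<^sup>2"
  shows "a = 0"
proof (rule ccontr)
  assume "a \<noteq> 0"
  define d where "d = \<bar>b\<bar> + 1"
  have "d > 0" by (simp add: d_def add_nonneg_pos)
  define t where "t = - a / d"
  have "b * t\<^sup>2 \<le> (d - 1) * t\<^sup>2" by (simp add: d_def mult_right_mono)
  moreover have "a * t + (d - 1) * t\<^sup>2 = - ((a / d)\<^sup>2)"
    unfolding t_def using \<open>d > 0\<close> by (simp add: field_simps power2_eq_square)
  moreover have "(a / d)\<^sup>2 > 0" using \<open>a \<noteq> 0\<close> \<open>d > 0\<close> by simp
  ultimately show False using assms[of t] by linarith
qed

lemma positive_semidef_quad_form_eq_0:
  assumes "positive_semidef A" "quad_form A x = 0"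
  shows "A *v x = 0"
proof -
  have h: "hermitian A" and nonneg: "\<And>z. 0 \<le> Re (quad_form A z)"
    using assms(1) by (auto simp: positive_semidef_iff)
  define y where "y = A *v x"
  have "quad_form A (x + of_real t *s y) = quad_form A x + of_real t * cinner x (A *v y)
      + of_real t * cinner y (A *v x) + of_real t * of_real t * quad_form A y" for t
    by (simp add: quad_form_def matrix_vector_right_distrib vector_scalar_commute cinner_add_left
        cinner_add_right cinner_scale_left cinner_scale_right algebra_simps)
  moreover have "cinner x (A *v y) = cinner y y" using cinner_hermitian[OF h] y_def by metis
  ultimately have "Re (quad_form A (x + of_real t *s y)) = 2 * norm y ^ 2 * t + Re (quad_form A y) * t\<^sup>2"
    for t using assms(2) by (simp add: y_def[symmetric] cinner_self power2_eq_square)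
  then have "0 \<le> 2 * norm y ^ 2 * t + Re (quad_form A y) * t\<^sup>2" for t
    using nonneg by metis
  then have "2 * norm y ^ 2 = 0" by (rule quadratic_nonneg_imp_linear_coeff_0)
  then show ?thesis by (simp add: y_def)
qed

lemma matrix_vector_mult_axis: "(A *v axis v 1) $ i = A $ i $ v"
  by (simp add: matrix_vector_mult_def axis_def if_distrib cong: if_cong)

lemma quad_form_axis: "quad_form A (axis v 1) = A $ v $ v"
proof -
  have "quad_form A (axis v 1) = (\<Sum>i\<in>UNIV. if i = v then A $ i $ v else 0)"
    unfolding quad_form_def cinner_def matrix_vector_mult_axis by (rule sum.cong) (auto simp: axis_def)
  then show ?thesis by simp
qed

lemma positive_semidef_diag_nonneg: "positive_semidef A \<Longrightarrow> 0 \<le> Re (A $ v $ v)"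
  unfolding positive_semidef_iff by (metis quad_form_axis)

lemma of_real_Re_diag_positive_semidef:
  "positive_semidef A \<Longrightarrow> of_real (Re (A $ v $ v)) = A $ v $ v"
  unfolding positive_semidef_iff using of_real_Re_diag_hermitian by blast

lemma positive_semidef_diag_pos:
  assumes "positive_semidef A" "A $ v $ v \<noteq> 0"
  shows "0 < Re (A $ v $ v)"
proof -
  have "Re (A $ v $ v) \<noteq> 0"
    using assms(2) of_real_Re_diag_positive_semidef[OF assms(1), of v] by force
  then show ?thesis using positive_semidef_diag_nonneg[OF assms(1), of v] by simp
qed

lemma positive_semidef_diag_eq_0:
  assumes "positive_semidef A" "A $ v $ v = 0"
  shows "A $ i $ v = 0" and "A $ v $ i = 0"
proof -
  have "A *v axis v 1 = 0"
    using positive_semidef_quad_form_eq_0[OF assms(1)] assms(2) by (simp add: quad_form_axis)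
  then show col: "A $ i $ v = 0" by (metis matrix_vector_mult_axis zero_index)
  have "hermitian A" using assms(1) by (simp add: positive_semidef_iff)
  then show "A $ v $ i = 0" using col hermitian_entry[of A i v] by simp
qed

lemma positive_semidef_eq_0_if_diag_eq_0:
  assumes "positive_semidef A" "\<And>v. A $ v $ v = 0"
  shows "A = 0"
  using positive_semidef_diag_eq_0(1)[OF assms(1) assms(2)] by (simp add: vec_eq_iff)

lemma positive_semidef_mscale:
  assumes "positive_semidef A" "0 \<le> r"
  shows "positive_semidef (mscale (of_real r) A)"
  using assms unfolding positive_semidef_iff hermitian_def
  by (simp add: adj_mscale quad_form_mscale)

text \<open>Minimise the Rayleigh quotient over the unit sphere; the minimiser is a null vector of
  the positive semidefinite matrix A - \<mu> I.\<close>
lemma hermitian_not_positive_semidef_neg_eigenvector: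
  assumes "hermitian A" "\<not> positive_semidef A"
  obtains x \<mu> where "x \<noteq> 0" "\<mu> < 0" "A *v x = of_real \<mu> *s x"
proof -
  define f where "f x = Re (quad_form A x)" for x
  from assms obtain y where y: "f y < 0" by (auto simp: positive_semidef_iff f_def not_le)
  have cont: "continuous_on (sphere 0 1) f"
    unfolding f_def quad_form_eq_sum by (intro continuous_intros)
  have f_scale: "f (of_real r *s z) = r\<^sup>2 * f z" for r z
    by (simp add: f_def quad_form_scale power2_eq_square)
  have of_real_scale: "of_real r *s z = r *\<^sub>R z" for r and z :: "complex^'a"
  proof -
    have "(r *\<^sub>R z) $ i = of_real r * z $ i" for i
      using scaleR_conv_of_real[of r "z $ i"] by simp
    then show ?thesis by (simp add: vec_eq_iff)
  qed
  have normalized: "of_real (1 / norm z) *s z \<in> sphere 0 1" if "z \<noteq> 0" for z :: "complex^'a"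
    using that unfolding of_real_scale by simp
  have f0: "f 0 = 0" by (simp add: f_def quad_form_def cinner_def)
  then have "y \<noteq> 0" using y by auto
  then obtain x0 where x0: "x0 \<in> sphere 0 1" "\<forall>z\<in>sphere 0 1. f x0 \<le> f z"
    using continuous_attains_inf[OF compact_sphere _ cont] normalized by blast
  define \<mu> where "\<mu> = f x0"
  have lower: "\<mu> * norm z ^ 2 \<le> f z" for z
  proof (cases "z = 0")
    case True
    then show ?thesis using f0 by simp
  next
    case False
    have "\<mu> \<le> f (of_real (1 / norm z) *s z)" using x0 normalized[OF False] \<mu>_def by blast
    also have "\<dots> = f z / norm z ^ 2" by (subst f_scale) (simp add: power_divide)
    finally show ?thesis using False by (simp add: field_simps)
  qed
  have "\<mu> < 0"
    using lower[of y] y \<open>y \<noteq> 0\<close> by (smt (verit) norm_ge_zero zero_le_mult_iff zero_le_power2)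
  define B where "B = A - mscale (of_real \<mu>) (mat 1)"
  have "hermitian B" using assms(1) by (simp add: B_def hermitian_def adj_diff adj_mscale adj_mat)
  moreover have Re_B: "Re (quad_form B z) = f z - \<mu> * norm z ^ 2" for z
    by (simp add: B_def f_def quad_form_def matrix_vector_mult_diff_rdistrib mscale_mv
        cinner_diff_right cinner_scale_right cinner_self)
  ultimately have "positive_semidef B" using lower by (simp add: positive_semidef_iff)
  moreover have "quad_form B x0 = 0"
    using Im_quad_form_hermitian[OF \<open>hermitian B\<close>, of x0] Re_B[of x0] x0(1) \<mu>_def
    by (simp add: complex_eq_iff)
  ultimately have "B *v x0 = 0" by (rule positive_semidef_quad_form_eq_0)
  then have eigen: "A *v x0 = of_real \<mu> *s x0"
    by (simp add: B_def matrix_vector_mult_diff_rdistrib mscale_mv)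
  have "x0 \<noteq> 0" using x0(1) by auto
  from this \<open>\<mu> < 0\<close> eigen show ?thesis by (rule that)
qed

lemma rank_eq_card_if_ker_trivial:
  fixes A :: "complex^'n::finite^'n"
  assumes "\<And>x. A *v x = 0 \<Longrightarrow> x = 0"
  shows "rank A = CARD('n)"
proof -
  have "\<exists>B. B ** A = mat 1" using assms matrix_left_invertible_ker by blast
  then have "vec.span (rows A) = UNIV" using matrix_left_invertible_span_rows_gen by blast
  then have "vec.dim (rows A) = vec.dim (UNIV :: (complex^'n) set)"
    using vec.dim_span[of "rows A"] by simp
  then show ?thesis by (simp add: row_rank_def_gen vec_dim_card card_cart_basis)
qed

definition diag_mat :: "('n::finite \<Rightarrow> complex) \<Rightarrow> complex^'n^'n" where
  "diag_mat d = (\<chi> i j. if i = j then d i else 0)"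

lemma diag_mat_entry: "diag_mat d $ i $ j = (if i = j then d i else 0)"
  by (simp add: diag_mat_def)

lemma diag_mat_mult_entry: "(diag_mat d ** A) $ i $ j = d i * A $ i $ j"
  by (simp add: matrix_matrix_mult_def diag_mat_def if_distrib[of "\<lambda>x. x * _"] cong: if_cong)

lemma mult_diag_mat_entry: "(A ** diag_mat d) $ i $ j = A $ i $ j * d j"
  by (simp add: matrix_matrix_mult_def diag_mat_def if_distrib[of "\<lambda>x. _ * x"] cong: if_cong)

lemma diag_mat_mv: "(diag_mat d *v x) $ i = d i * x $ i"
  by (simp add: matrix_vector_mult_def diag_mat_def if_distrib[of "\<lambda>x. x * _"] cong: if_cong)

lemma adj_diag_mat: "adj (diag_mat d) = diag_mat (\<lambda>i. cnj (d i))"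
  by (auto simp: vec_eq_iff adj_def diag_mat_entry)

lemma trace_diag_mat: "trace (diag_mat d) = (\<Sum>i\<in>UNIV. d i)"
  by (simp add: trace_def diag_mat_entry)

lemma quad_form_diag_mat_of_real:
  "quad_form (diag_mat (\<lambda>i. of_real (r i))) x = of_real (\<Sum>i\<in>UNIV. r i * cmod (x $ i) ^ 2)"
  unfolding quad_form_def cinner_def diag_mat_mv of_real_sum
  by (rule sum.cong) (simp_all add: complex_norm_square mult_ac del: of_real_power)

lemma positive_semidef_diag_mat:
  assumes "\<And>i. 0 \<le> r i"
  shows "positive_semidef (diag_mat (\<lambda>i. of_real (r i)))"
  unfolding positive_semidef_iff hermitian_def adj_diag_mat quad_form_diag_mat_of_real
  using assms by (simp add: sum_nonneg)

lemma quad_form_diag_mat_eq_0: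
  assumes "\<And>i. 0 \<le> r i" "quad_form (diag_mat (\<lambda>i. of_real (r i))) x = 0" "x $ i \<noteq> 0"
  shows "r i = 0"
proof -
  have "(\<Sum>i\<in>UNIV. r i * cmod (x $ i) ^ 2) = 0"
    using assms(2) unfolding quad_form_diag_mat_of_real of_real_eq_0_iff .
  then have "r i * cmod (x $ i) ^ 2 = 0"
    using assms(1) by (simp add: sum_nonneg_eq_0_iff)
  then show ?thesis using assms(3) by simp
qed

lemma sum_weighted_eq_imp_eq:
  fixes a b w :: "'a \<Rightarrow> real"
  assumes "finite A" "\<And>i. i \<in> A \<Longrightarrow> 0 < w i" "\<And>i. i \<in> A \<Longrightarrow> a i \<le> b i"
    and "(\<Sum>i\<in>A. w i * a i) = (\<Sum>i\<in>A. w i * b i)" "i \<in> A"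
  shows "a i = b i"
proof -
  have "(\<Sum>i\<in>A. w i * (b i - a i)) = 0"
    using assms(4) by (simp add: right_diff_distrib sum_subtractf)
  moreover have "\<And>i. i \<in> A \<Longrightarrow> 0 \<le> w i * (b i - a i)"
    using assms(2,3) by (simp add: less_imp_le)
  ultimately have "w i * (b i - a i) = 0"
    using assms(1,5) by (simp add: sum_nonneg_eq_0_iff)
  then show ?thesis using assms(2)[OF assms(5)] by simp
qed

section \<open>Decomposition of the generator\<close>

definition escape_rate :: "('v::finite \<times> 'v) set \<Rightarrow> ('v \<times> 'v \<Rightarrow> complex) \<Rightarrow> 'v \<Rightarrow> real" where
  "escape_rate E c v = (\<Sum>e\<in>{e\<in>E. fst e = v}. cmod (c e) ^ 2)"

definition inflow :: "('v::finite \<times> 'v) set \<Rightarrow> ('v \<times> 'v \<Rightarrow> complex) \<Rightarrow> ('v \<Rightarrow> complex) \<Rightarrow> complex^'v^'v"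
  where "inflow E c q = diag_mat (\<lambda>i. \<Sum>e\<in>{e\<in>E. snd e = i}. of_real (cmod (c e) ^ 2) * q (fst e))"

definition decay_map :: "complex^'v::finite^'v \<Rightarrow> ('v \<times> 'v) set \<Rightarrow> ('v \<times> 'v \<Rightarrow> complex)
    \<Rightarrow> complex^'v^'v \<Rightarrow> complex^'v^'v" where
  "decay_map H E c X = mscale (- \<i>) (commutator H X)
     - mscale (1/2) (anticommutator (diag_mat (\<lambda>v. of_real (escape_rate E c v))) X)"

definition graph_generator :: "complex^'v::finite^'v \<Rightarrow> ('v \<times> 'v) set \<Rightarrow> ('v \<times> 'v \<Rightarrow> complex)
    \<Rightarrow> complex^'v^'v \<Rightarrow> complex^'v^'v" where
  "graph_generator H E c X = decay_map H E c X + inflow E c (\<lambda>v. X $ v $ v)"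

lemma anticommutator_diag_mat_entry:
  "anticommutator (diag_mat d) X $ i $ j = (d i + d j) * X $ i $ j"
  by (simp add: anticommutator_def diag_mat_mult_entry mult_diag_mat_entry ring_distribs mult.commute)

lemma jump_entry: "mscale a (ketbra w v) $ i $ j = (if i = w \<and> j = v then a else 0)"
  by (simp add: mscale_def ketbra_def)

lemma adj_jump: "adj (mscale a (ketbra w v)) = mscale (cnj a) (ketbra v w)"
  by (auto simp: vec_eq_iff adj_def jump_entry)

lemma jump_mult_entry: "(mscale a (ketbra w v) ** X) $ i $ j = (if i = w then a * X $ v $ j else 0)"
  by (simp add: matrix_matrix_mult_def jump_entry if_distrib[of "\<lambda>x. x * _"] cong: if_cong)

lemma mult_jump_entry: "(X ** mscale a (ketbra w v)) $ i $ j = (if j = v then X $ i $ w * a else 0)"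
  by (simp add: matrix_matrix_mult_def jump_entry if_distrib[of "\<lambda>x. _ * x"] cong: if_cong)

lemma jump_sandwich_entry:
  "(mscale a (ketbra w v) ** X ** adj (mscale a (ketbra w v))) $ i $ j
     = (if i = w \<and> j = w then of_real (cmod a ^ 2) * X $ v $ v else 0)"
  by (simp add: adj_jump mult_jump_entry jump_mult_entry complex_norm_square mult_ac del: of_real_power)

lemma adj_jump_mult_jump:
  "adj (mscale a (ketbra w v)) ** mscale a (ketbra w v)
     = diag_mat (\<lambda>i. if i = v then of_real (cmod a ^ 2) else 0)"
  by (simp add: vec_eq_iff adj_jump jump_mult_entry jump_entry diag_mat_entry complex_norm_square
      mult_ac del: of_real_power)

lemma sum_edges_from:
  "(\<Sum>e\<in>E. if i = fst e then of_real (cmod (c e) ^ 2) else 0) = (of_real (escape_rate E c i) :: complex)"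
  for E :: "('v::finite \<times> 'v) set"
  unfolding escape_rate_def of_real_sum eq_commute[of i]
  by (simp add: sum.inter_filter del: of_real_power)

lemma inflow_entry:
  "inflow E c q $ i $ j = (if i = j then \<Sum>e\<in>{e\<in>E. snd e = i}. of_real (cmod (c e) ^ 2) * q (fst e) else 0)"
  by (simp add: inflow_def diag_mat_entry)

lemma sum_edges_into:
  "(\<Sum>e\<in>E. if i = snd e \<and> j = snd e then of_real (cmod (c e) ^ 2) * q (fst e) else 0)
     = inflow E c q $ i $ j"
  for E :: "('v::finite \<times> 'v) set"
proof (cases "i = j")
  case True
  then have cond: "(i = snd e \<and> j = snd e) \<longleftrightarrow> snd e = i" for e :: "'v \<times> 'v" by auto
  show ?thesis
    unfolding cond inflow_entry using True by (simp add: sum.inter_filter del: of_real_power)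
next
  case False
  then have cond: "(i = snd e \<and> j = snd e) \<longleftrightarrow> False" for e :: "'v \<times> 'v" by auto
  show ?thesis unfolding cond inflow_entry using False by simp
qed

lemma gksl_graph_jumps:
  "gksl H E (\<lambda>(v, w). mscale (c (v, w)) (ketbra w v)) X = graph_generator H E c X"
  for E :: "('v::finite \<times> 'v) set"
proof -
  let ?L = "\<lambda>(v, w). mscale (c (v, w)) (ketbra w v)"
  have jump_term: "(?L e ** X ** adj (?L e) - mscale (1/2) (anticommutator (adj (?L e) ** ?L e) X)) $ i $ j
      = (if i = snd e \<and> j = snd e then of_real (cmod (c e) ^ 2) * X $ fst e $ fst e else 0)
        - 1/2 * ((if i = fst e then of_real (cmod (c e) ^ 2) else 0)
                 + (if j = fst e then of_real (cmod (c e) ^ 2) else 0)) * X $ i $ j" for e i j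
    by (cases e) (simp add: jump_sandwich_entry adj_jump_mult_jump anticommutator_diag_mat_entry mscale_entry
        del: of_real_power)
  let ?\<Gamma> = "diag_mat (\<lambda>v. of_real (escape_rate E c v))"
  have entrywise: "(\<Sum>e\<in>E. ?L e ** X ** adj (?L e) - mscale (1/2) (anticommutator (adj (?L e) ** ?L e) X)) $ i $ j
      = (inflow E c (\<lambda>v. X $ v $ v) - mscale (1/2) (anticommutator ?\<Gamma> X)) $ i $ j" for i j
  proof -
    have "(\<Sum>e\<in>E. ?L e ** X ** adj (?L e) - mscale (1/2) (anticommutator (adj (?L e) ** ?L e) X)) $ i $ j
        = inflow E c (\<lambda>v. X $ v $ v) $ i $ j
          - 1/2 * (of_real (escape_rate E c i) + of_real (escape_rate E c j)) * X $ i $ j"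
      unfolding sum_component jump_term
      by (simp only: sum_subtractf sum.distrib sum_distrib_left[symmetric] sum_distrib_right[symmetric]
          sum_edges_into[where q = "\<lambda>v. X $ v $ v"] sum_edges_from)
    then show ?thesis by (simp add: anticommutator_diag_mat_entry mscale_entry)
  qed
  have "(\<Sum>e\<in>E. ?L e ** X ** adj (?L e) - mscale (1/2) (anticommutator (adj (?L e) ** ?L e) X))
      = inflow E c (\<lambda>v. X $ v $ v) - mscale (1/2) (anticommutator ?\<Gamma> X)"
    unfolding vec_eq_iff using entrywise by blast
  then show ?thesis
    unfolding gksl_def graph_generator_def decay_map_def by (simp add: algebra_simps)
qed

lemma decay_map_entry:
  "decay_map H E c X $ i $ j = - \<i> * ((\<Sum>k\<in>UNIV. H $ i $ k * X $ k $ j) - (\<Sum>k\<in>UNIV. X $ i $ k * H $ k $ j))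
     - (of_real (escape_rate E c i) + of_real (escape_rate E c j)) / 2 * X $ i $ j"
  by (simp add: decay_map_def mscale_entry commutator_def anticommutator_diag_mat_entry
      matrix_matrix_mult_def algebra_simps)

lemma decay_map_add: "decay_map H E c (X + Y) = decay_map H E c X + decay_map H E c Y"
  by (simp add: vec_eq_iff decay_map_entry sum.distrib field_simps)

lemma decay_map_diff: "decay_map H E c (X - Y) = decay_map H E c X - decay_map H E c Y"
  by (simp add: vec_eq_iff decay_map_entry sum_subtractf field_simps)

lemma decay_map_mscale: "decay_map H E c (mscale a X) = mscale a (decay_map H E c X)"
  by (simp add: vec_eq_iff decay_map_entry mscale_entry algebra_simps sum_distrib_left)

lemma inflow_add: "inflow E c (\<lambda>v. q v + r v) = inflow E c q + inflow E c r"
  by (simp add: vec_eq_iff inflow_entry algebra_simps sum.distrib)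

lemma inflow_diff: "inflow E c (\<lambda>v. q v - r v) = inflow E c q - inflow E c r"
  by (simp add: vec_eq_iff inflow_entry algebra_simps sum_subtractf)

lemma inflow_mult: "inflow E c (\<lambda>v. a * q v) = mscale a (inflow E c q)"
  by (simp add: vec_eq_iff inflow_entry mscale_entry algebra_simps sum_distrib_left)

lemma inflow_of_real:
  "inflow E c (\<lambda>v. of_real (r v))
     = diag_mat (\<lambda>i. of_real (\<Sum>e\<in>{e\<in>E. snd e = i}. cmod (c e) ^ 2 * r (fst e)))"
  by (simp add: inflow_def of_real_sum)

lemma positive_semidef_inflow:
  "(\<And>v. 0 \<le> r v) \<Longrightarrow> positive_semidef (inflow E c (\<lambda>v. of_real (r v)))"
  unfolding inflow_of_real by (intro positive_semidef_diag_mat sum_nonneg) simp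

lemma graph_generator_add: "graph_generator H E c (X + Y) = graph_generator H E c X + graph_generator H E c Y"
  by (simp add: graph_generator_def decay_map_add inflow_add)

lemma graph_generator_diff: "graph_generator H E c (X - Y) = graph_generator H E c X - graph_generator H E c Y"
  by (simp add: graph_generator_def decay_map_diff inflow_diff)

lemma graph_generator_mscale: "graph_generator H E c (mscale a X) = mscale a (graph_generator H E c X)"
  by (simp add: graph_generator_def decay_map_mscale mscale_entry inflow_mult vec_eq_iff algebra_simps)

lemma linear_decay_map: "linear (decay_map H E c)"
  by (rule linearI) (simp_all add: decay_map_add scaleR_eq_mscale decay_map_mscale)

lemma linear_graph_generator: "linear (graph_generator H E c)"
  by (rule linearI) (simp_all add: graph_generator_add scaleR_eq_mscale graph_generator_mscale)

lemma decay_map_adj: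
  assumes "hermitian H"
  shows "decay_map H E c (adj X) = adj (decay_map H E c X)"
  using hermitian_entry[OF assms]
  by (simp add: vec_eq_iff decay_map_entry adj_def algebra_simps mult.commute)

lemma inflow_adj: "adj (inflow E c q) = inflow E c (\<lambda>v. cnj (q v))"
  by (simp add: inflow_def adj_diag_mat)

lemma graph_generator_adj:
  assumes "hermitian H"
  shows "graph_generator H E c (adj X) = adj (graph_generator H E c X)"
  by (simp add: graph_generator_def decay_map_adj[OF assms] inflow_adj adj_add adj_entry)

lemma trace_decay_map:
  "trace (decay_map H E c X) = - (\<Sum>v\<in>UNIV. of_real (escape_rate E c v) * X $ v $ v)"
proof -
  let ?\<Gamma> = "diag_mat (\<lambda>v. of_real (escape_rate E c v))"
  have "trace (?\<Gamma> ** X) = (\<Sum>v\<in>UNIV. of_real (escape_rate E c v) * X $ v $ v)"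
    by (simp add: trace_def diag_mat_mult_entry)
  then show ?thesis
    by (simp add: decay_map_def trace_sub trace_mscale commutator_def anticommutator_def trace_add
        trace_mul_sym[of X])
qed

lemma trace_inflow: "trace (inflow E c q) = (\<Sum>v\<in>UNIV. of_real (escape_rate E c v) * q v)"
  for E :: "('v::finite \<times> 'v) set"
proof -
  have "trace (inflow E c q) = (\<Sum>i\<in>UNIV. \<Sum>e\<in>{e\<in>E. snd e = i}. of_real (cmod (c e) ^ 2) * q (fst e))"
    by (simp add: inflow_def trace_diag_mat)
  also have "\<dots> = (\<Sum>e\<in>E. of_real (cmod (c e) ^ 2) * q (fst e))"
    by (rule sum.group) auto
  also have "\<dots> = (\<Sum>v\<in>UNIV. \<Sum>e\<in>{e\<in>E. fst e = v}. of_real (cmod (c e) ^ 2) * q (fst e))"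
    by (rule sum.group[symmetric]) auto
  also have "\<dots> = (\<Sum>v\<in>UNIV. of_real (escape_rate E c v) * q v)"
    by (simp add: escape_rate_def of_real_sum sum_distrib_right del: of_real_power)
  finally show ?thesis .
qed

lemma trace_graph_generator: "trace (graph_generator H E c X) = 0"
  by (simp add: graph_generator_def trace_add trace_decay_map trace_inflow)

text \<open>The Hamiltonian part contributes only an imaginary number to the Frobenius product of X with
  its image, because both X* H X and X* X H have real trace.\<close>
lemma Re_frobenius_decay_map:
  assumes "hermitian H"
  shows "Re (\<Sum>i\<in>UNIV. \<Sum>j\<in>UNIV. cnj (X $ i $ j) * decay_map H E c X $ i $ j)
    = - (\<Sum>i\<in>UNIV. \<Sum>j\<in>UNIV. (escape_rate E c i + escape_rate E c j) / 2 * cmod (X $ i $ j) ^ 2)"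
proof -
  define S1 where "S1 = (\<Sum>i\<in>UNIV. \<Sum>j\<in>UNIV. cnj (X $ i $ j) * (\<Sum>k\<in>UNIV. H $ i $ k * X $ k $ j))"
  define S2 where "S2 = (\<Sum>i\<in>UNIV. \<Sum>j\<in>UNIV. cnj (X $ i $ j) * (\<Sum>k\<in>UNIV. X $ i $ k * H $ k $ j))"
  define R where "R = (\<Sum>i\<in>UNIV. \<Sum>j\<in>UNIV. (escape_rate E c i + escape_rate E c j) / 2 * cmod (X $ i $ j) ^ 2)"
  have entry: "cnj x * (- \<i> * (a - b) - (of_real gi + of_real gj) / 2 * x)
      = - \<i> * (cnj x * a) - (- \<i> * (cnj x * b)) - of_real ((gi + gj) / 2 * cmod x ^ 2)" for x a b gi gj
  proof -
    have "cnj x * (- \<i> * (a - b) - (of_real gi + of_real gj) / 2 * x)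
        = - \<i> * (cnj x * a) - (- \<i> * (cnj x * b)) - (of_real gi + of_real gj) / 2 * (cnj x * x)"
      by (simp add: algebra_simps)
    also have "cnj x * x = of_real (cmod x ^ 2)" by (metis complex_norm_square mult.commute of_real_power)
    finally show ?thesis by simp
  qed
  have frobenius: "(\<Sum>i\<in>UNIV. \<Sum>j\<in>UNIV. cnj (X $ i $ j) * decay_map H E c X $ i $ j)
      = - \<i> * S1 - (- \<i> * S2) - of_real R"
    unfolding decay_map_entry entry S1_def S2_def R_def
    by (simp add: sum_subtractf sum_distrib_left of_real_sum)
  have "S1 = (\<Sum>j\<in>UNIV. quad_form H (\<chi> i. X $ i $ j))"
    unfolding S1_def quad_form_def cinner_def matrix_vector_mult_def by (subst sum.swap) simp
  then have "Im S1 = 0"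
    by (simp add: Im_sum Im_quad_form_hermitian[OF assms])
  have "hermitian (transpose H)"
    using hermitian_entry[OF assms] by (simp add: hermitian_def adj_def transpose_def vec_eq_iff)
  moreover have "S2 = (\<Sum>i\<in>UNIV. quad_form (transpose H) (\<chi> j. X $ i $ j))"
    unfolding S2_def quad_form_def cinner_def matrix_vector_mult_def transpose_def by (simp add: mult.commute)
  ultimately have "Im S2 = 0"
    by (simp add: Im_sum Im_quad_form_hermitian)
  show ?thesis using \<open>Im S1 = 0\<close> \<open>Im S2 = 0\<close> unfolding frobenius R_def by simp
qed

lemma decay_map_eq_0_imp:
  assumes "hermitian H" "\<And>v. 0 < escape_rate E c v" "decay_map H E c X = 0"
  shows "X = 0"
proof -
  have "(\<Sum>i\<in>UNIV. \<Sum>j\<in>UNIV. (escape_rate E c i + escape_rate E c j) / 2 * cmod (X $ i $ j) ^ 2) = 0"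
    using Re_frobenius_decay_map[OF assms(1), of X E c] assms(3) by simp
  moreover have nonneg: "0 \<le> (escape_rate E c i + escape_rate E c j) / 2 * cmod (X $ i $ j) ^ 2" for i j
    using assms(2)[of i] assms(2)[of j] by simp
  ultimately have "(escape_rate E c i + escape_rate E c j) / 2 * cmod (X $ i $ j) ^ 2 = 0" for i j
    by (simp add: sum_nonneg_eq_0_iff sum_nonneg)
  moreover have "(escape_rate E c i + escape_rate E c j) / 2 \<noteq> 0" for i j
    using assms(2)[of i] assms(2)[of j] by simp
  ultimately have "X $ i $ j = 0" for i j by simp
  then show ?thesis by (simp add: vec_eq_iff)
qed

lemma surj_decay_map:
  assumes "hermitian H" "\<And>v. 0 < escape_rate E c v"
  shows "surj (decay_map H E c)"
proof -
  have "inj (decay_map H E c)"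
    unfolding linear_injective_0[OF linear_decay_map] using decay_map_eq_0_imp[OF assms] by blast
  then show ?thesis using linear_injective_imp_surjective linear_decay_map by blast
qed

lemma quad_form_decay_map_eigenvector:
  assumes "hermitian X" "X *v x = of_real \<mu> *s x"
  shows "quad_form (decay_map H E c X) x
    = - of_real \<mu> * quad_form (diag_mat (\<lambda>v. of_real (escape_rate E c v))) x"
proof -
  have "cinner x (X *v y) = of_real \<mu> * cinner x y" for y
    using cinner_hermitian[OF assms(1), of x y] assms(2) by (simp add: cinner_scale_left)
  then show ?thesis using assms(2)
    by (simp add: quad_form_def decay_map_def matrix_vector_mult_diff_rdistrib mscale_mv commutator_mv
        anticommutator_mv cinner_diff_right cinner_scale_right cinner_add_right vector_scalar_commute
        algebra_simps)
qed

text \<open>The maximum principle: test the equation on an eigenvector of X for a negative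
  eigenvalue.\<close>
lemma positive_semidef_if_decay_map_eq_neg:
  assumes "\<And>v. 0 < escape_rate E c v" "hermitian X" "positive_semidef Q" "decay_map H E c X = - Q"
  shows "positive_semidef X"
proof (rule ccontr)
  assume "\<not> positive_semidef X"
  then obtain x \<mu> where x: "x \<noteq> 0" "\<mu> < 0" "X *v x = of_real \<mu> *s x"
    using hermitian_not_positive_semidef_neg_eigenvector[OF assms(2)] by blast
  then obtain i where "x $ i \<noteq> 0" by (auto simp: vec_eq_iff)
  then have "0 < escape_rate E c i * cmod (x $ i) ^ 2" using assms(1)[of i] by simp
  moreover have "0 \<le> escape_rate E c j * cmod (x $ j) ^ 2" for j using assms(1)[of j] by simp
  ultimately have "0 < (\<Sum>i\<in>UNIV. escape_rate E c i * cmod (x $ i) ^ 2)"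
    by (intro sum_pos2[where i = i]) auto
  moreover have "quad_form Q x = of_real \<mu> * of_real (\<Sum>i\<in>UNIV. escape_rate E c i * cmod (x $ i) ^ 2)"
    using quad_form_decay_map_eigenvector[OF assms(2) x(3), of H E c] assms(4)
    by (simp add: quad_form_diag_mat_of_real quad_form_uminus)
  ultimately have "Re (quad_form Q x) < 0" using x(2) by (simp add: mult_neg_pos)
  then show False using assms(3) unfolding positive_semidef_iff by (metis not_le)
qed

section \<open>Stationary states\<close>

lemma exists_other_vertex:
  fixes v :: "'v::finite"
  assumes "1 < CARD('v)"
  obtains w where "w \<noteq> v"
  using assms by (metis UNIV_I is_singleton_altdef is_singleton_iff_ex1 less_not_refl)

lemma strongly_connected_out_edge:
  assumes "strongly_connected E" "w \<noteq> v"
  obtains u where "(v, u) \<in> E"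
  using assms unfolding strongly_connected_def by (metis converse_rtranclE)

lemma strongly_connected_in_edge:
  assumes "strongly_connected E" "w \<noteq> v"
  obtains u where "(u, v) \<in> E"
  using assms unfolding strongly_connected_def by (metis rtranclE)

lemma escape_rate_pos:
  fixes E :: "('v::finite \<times> 'v) set"
  assumes "strongly_connected E" "\<forall>e\<in>E. c e \<noteq> 0" "1 < CARD('v)"
  shows "0 < escape_rate E c v"
proof -
  obtain w :: 'v where "w \<noteq> v" using exists_other_vertex[OF assms(3)] .
  then obtain u where "(v, u) \<in> E" using strongly_connected_out_edge[OF assms(1)] by blast
  then show ?thesis
    unfolding escape_rate_def using assms(2) by (intro sum_pos2[where i = "(v, u)"]) auto
qed

lemma inflow_diag_eq_0_imp:
  assumes "positive_semidef \<rho>" "inflow E c (\<lambda>v. \<rho> $ v $ v) $ v $ v = 0" "(u, v) \<in> E" "c (u, v) \<noteq> 0"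
  shows "\<rho> $ u $ u = 0"
proof -
  define r where "r v = Re (\<rho> $ v $ v)" for v
  have diag: "(\<lambda>v. \<rho> $ v $ v) = (\<lambda>v. of_real (r v))"
    using of_real_Re_diag_positive_semidef[OF assms(1)] by (auto simp: r_def)
  have nonneg: "0 \<le> cmod (c e) ^ 2 * r (fst e)" for e
    using positive_semidef_diag_nonneg[OF assms(1)] by (simp add: r_def)
  have "(\<Sum>e\<in>{e\<in>E. snd e = v}. cmod (c e) ^ 2 * r (fst e)) = 0"
    using assms(2) unfolding diag inflow_of_real by (simp add: diag_mat_entry del: of_real_sum)
  then have "cmod (c (u, v)) ^ 2 * r u = 0"
    using assms(3) nonneg by (simp add: sum_nonneg_eq_0_iff)
  then have "r u = 0" using assms(4) by simp
  then show ?thesis using diag by (metis of_real_0)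
qed

lemma decay_map_diag_eq_0:
  assumes "positive_semidef \<rho>" "\<rho> $ v $ v = 0"
  shows "decay_map H E c \<rho> $ v $ v = 0"
  using positive_semidef_diag_eq_0[OF assms] assms(2) by (simp add: decay_map_entry)

lemma stationary_diag_eq_0_predecessor:
  assumes "positive_semidef \<rho>" "graph_generator H E c \<rho> = 0" "\<rho> $ v $ v = 0"
    and "(u, v) \<in> E" "c (u, v) \<noteq> 0"
  shows "\<rho> $ u $ u = 0"
proof -
  have "(decay_map H E c \<rho> + inflow E c (\<lambda>v. \<rho> $ v $ v)) $ v $ v = 0"
    using assms(2) by (simp add: graph_generator_def)
  then have "inflow E c (\<lambda>v. \<rho> $ v $ v) $ v $ v = 0"
    using decay_map_diag_eq_0[OF assms(1,3)] by simp
  then show ?thesis using inflow_diag_eq_0_imp assms(1,4,5) by blast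
qed

lemma stationary_positive_semidef_eq_0:
  assumes "strongly_connected E" "\<forall>e\<in>E. c e \<noteq> 0"
    and "positive_semidef \<rho>" "graph_generator H E c \<rho> = 0" "\<rho> $ v $ v = 0"
  shows "\<rho> = 0"
proof (rule positive_semidef_eq_0_if_diag_eq_0[OF assms(3)])
  fix u
  have "(u, v) \<in> E\<^sup>*" using assms(1) by (simp add: strongly_connected_def)
  then show "\<rho> $ u $ u = 0"
  proof (induction rule: converse_rtrancl_induct)
    case base
    show ?case by (fact assms(5))
  next
    case (step y z)
    then show ?case using stationary_diag_eq_0_predecessor[OF assms(3,4)] assms(2) by blast
  qed
qed

lemma stationary_positive_semidef_diag_pos:
  assumes "strongly_connected E" "\<forall>e\<in>E. c e \<noteq> 0"
    and "positive_semidef \<rho>" "graph_generator H E c \<rho> = 0" "\<rho> \<noteq> 0"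
  shows "0 < Re (\<rho> $ v $ v)"
proof -
  have "\<rho> $ v $ v \<noteq> 0" using stationary_positive_semidef_eq_0[OF assms(1-4)] assms(5) by blast
  then show ?thesis by (rule positive_semidef_diag_pos[OF assms(3)])
qed

text \<open>On a null vector x of \<rho> the decay part vanishes, so the inflow at every vertex where x is
  supported is zero, which empties the predecessor of that vertex.\<close>
lemma stationary_positive_semidef_ker_eq_0:
  fixes E :: "('v::finite \<times> 'v) set"
  assumes "strongly_connected E" "\<forall>e\<in>E. c e \<noteq> 0" "1 < CARD('v)"
    and "positive_semidef \<rho>" "graph_generator H E c \<rho> = 0" "\<rho> \<noteq> 0" "\<rho> *v x = 0"
  shows "x = 0"
proof (rule ccontr)
  assume "x \<noteq> 0"
  then obtain i where "x $ i \<noteq> 0" by (auto simp: vec_eq_iff)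
  have "hermitian \<rho>" using assms(4) by (simp add: positive_semidef_iff)
  define r where "r v = Re (\<rho> $ v $ v)" for v
  have diag: "(\<lambda>v. \<rho> $ v $ v) = (\<lambda>v. of_real (r v))"
    using of_real_Re_diag_positive_semidef[OF assms(4)] by (auto simp: r_def)
  define s where "s i = (\<Sum>e\<in>{e\<in>E. snd e = i}. cmod (c e) ^ 2 * r (fst e))" for i
  have inflow: "inflow E c (\<lambda>v. \<rho> $ v $ v) = diag_mat (\<lambda>i. of_real (s i))"
    unfolding diag inflow_of_real s_def ..
  have "quad_form (decay_map H E c \<rho>) x = 0"
    using quad_form_decay_map_eigenvector[OF \<open>hermitian \<rho>\<close>, of x 0] assms(7) by simp
  moreover have "quad_form (graph_generator H E c \<rho>) x = 0"
    using assms(5) by (simp add: quad_form_def cinner_def)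
  ultimately have "quad_form (diag_mat (\<lambda>i. of_real (s i))) x = 0"
    by (simp add: graph_generator_def inflow quad_form_def matrix_vector_mult_add_rdistrib cinner_add_right)
  moreover have "0 \<le> s i" for i
    using positive_semidef_diag_nonneg[OF assms(4)] by (simp add: s_def r_def sum_nonneg)
  ultimately have "s i = 0" using quad_form_diag_mat_eq_0 \<open>x $ i \<noteq> 0\<close> by blast
  then have "inflow E c (\<lambda>v. \<rho> $ v $ v) $ i $ i = 0" by (simp add: inflow diag_mat_entry)
  moreover obtain w :: 'v where "w \<noteq> i" using exists_other_vertex[OF assms(3)] .
  then obtain u where "(u, i) \<in> E" using strongly_connected_in_edge[OF assms(1)] by blast
  ultimately have "\<rho> $ u $ u = 0" using inflow_diag_eq_0_imp[OF assms(4)] assms(2) by blast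
  then show False using stationary_positive_semidef_eq_0[OF assms(1,2,4,5)] assms(6) by blast
qed

lemma density_matrix_normalize:
  assumes "positive_semidef W" "W \<noteq> 0"
  shows "density_matrix (mscale (of_real (1 / Re (trace W))) W)"
proof -
  define t where "t = Re (trace W)"
  obtain v where "W $ v $ v \<noteq> 0" using positive_semidef_eq_0_if_diag_eq_0[OF assms(1)] assms(2) by blast
  then have "0 < Re (W $ v $ v)" by (rule positive_semidef_diag_pos[OF assms(1)])
  then have "0 < t"
    unfolding t_def trace_def Re_sum using positive_semidef_diag_nonneg[OF assms(1)]
    by (intro sum_pos2[where i = v]) auto
  moreover have "trace W = of_real t"
    unfolding t_def trace_def Re_sum of_real_sum using of_real_Re_diag_positive_semidef[OF assms(1)] by simp
  ultimately have "trace (mscale (of_real (1 / t)) W) = 1"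
    by (simp add: trace_mscale flip: of_real_mult)
  moreover have "positive_semidef (mscale (of_real (1 / t)) W)"
    using positive_semidef_mscale[OF assms(1), of "1 / t"] \<open>0 < t\<close> by simp
  ultimately show ?thesis by (simp add: density_matrix_def t_def)
qed

text \<open>Subtract from \<rho>1 the largest multiple of \<rho>2 that keeps the diagonal nonnegative: the
  difference is again stationary, hence positive semidefinite by the maximum principle, and it
  has an empty diagonal entry, hence vanishes.\<close>
lemma stationary_density_unique:
  fixes E :: "('v::finite \<times> 'v) set"
  assumes "strongly_connected E" "\<forall>e\<in>E. c e \<noteq> 0" "1 < CARD('v)"
    and "density_matrix \<rho>1" "graph_generator H E c \<rho>1 = 0"
    and "density_matrix \<rho>2" "graph_generator H E c \<rho>2 = 0"
  shows "\<rho>1 = \<rho>2"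
proof -
  have psd1: "positive_semidef \<rho>1" and tr1: "trace \<rho>1 = 1" using assms(4) by (auto simp: density_matrix_def)
  have psd2: "positive_semidef \<rho>2" and tr2: "trace \<rho>2 = 1" using assms(6) by (auto simp: density_matrix_def)
  have "\<rho>2 \<noteq> 0" using tr2 by (auto simp: trace_def)
  then have pos2: "0 < Re (\<rho>2 $ v $ v)" for v
    using stationary_positive_semidef_diag_pos[OF assms(1,2) psd2 assms(7)] by blast
  define f where "f v = Re (\<rho>1 $ v $ v) / Re (\<rho>2 $ v $ v)" for v
  define t where "t = Min (range f)"
  have t_le: "t \<le> f v" for v unfolding t_def by (rule Min_le) auto
  have "t \<in> range f" unfolding t_def by (rule Min_in) auto
  then obtain v0 where v0: "f v0 = t" by blast
  define Z where "Z = \<rho>1 - mscale (of_real t) \<rho>2"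
  have "hermitian Z"
    using psd1 psd2 by (simp add: Z_def positive_semidef_iff hermitian_def adj_diff adj_mscale)
  have stationary: "graph_generator H E c Z = 0"
    by (simp add: Z_def graph_generator_diff graph_generator_mscale assms(5,7))
  have diag: "Z $ v $ v = of_real (Re (\<rho>1 $ v $ v) - t * Re (\<rho>2 $ v $ v))" for v
    using of_real_Re_diag_positive_semidef[OF psd1, of v] of_real_Re_diag_positive_semidef[OF psd2, of v]
    by (simp add: Z_def mscale_entry)
  have diag_nonneg: "0 \<le> Re (\<rho>1 $ v $ v) - t * Re (\<rho>2 $ v $ v)" for v
    using t_le[of v] pos2[of v] by (simp add: f_def le_divide_eq)
  have "positive_semidef (inflow E c (\<lambda>v. of_real (Re (\<rho>1 $ v $ v) - t * Re (\<rho>2 $ v $ v))))"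
    by (intro positive_semidef_inflow diag_nonneg)
  moreover have "decay_map H E c Z = - inflow E c (\<lambda>v. of_real (Re (\<rho>1 $ v $ v) - t * Re (\<rho>2 $ v $ v)))"
    using stationary unfolding graph_generator_def diag by (simp add: eq_neg_iff_add_eq_0)
  ultimately have "positive_semidef Z"
    by (rule positive_semidef_if_decay_map_eq_neg[OF escape_rate_pos[OF assms(1-3)] \<open>hermitian Z\<close>])
  moreover have "Z $ v0 $ v0 = 0"
    using v0 pos2[of v0] unfolding diag f_def by (simp add: field_simps)
  ultimately have "Z = 0" using stationary_positive_semidef_eq_0[OF assms(1,2) _ stationary] by blast
  then have "\<rho>1 = mscale (of_real t) \<rho>2" by (simp add: Z_def)
  moreover have "t = 1" using arg_cong[OF calculation, of trace] tr1 tr2 by (simp add: trace_mscale)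
  ultimately show ?thesis by (simp add: mscale_1)
qed

lemma graph_generator_hermitian_kernel:
  assumes "hermitian H"
  obtains X where "hermitian X" "X \<noteq> 0" "graph_generator H E c X = 0"
proof -
  have "graph_generator H E c X \<noteq> mat 1" for X
    using trace_graph_generator[of H E c X] by (auto simp: trace_I)
  then have "\<not> inj (graph_generator H E c)"
    using linear_injective_imp_surjective[OF linear_graph_generator] by (metis surjD)
  then obtain Z where "Z \<noteq> 0" and kernel: "graph_generator H E c Z = 0"
    unfolding linear_injective_0[OF linear_graph_generator] by blast
  then have kernel_adj: "graph_generator H E c (adj Z) = 0"
    unfolding graph_generator_adj[OF assms] by (simp add: vec_eq_iff adj_entry)
  show ?thesis
  proof (cases "Z + adj Z = 0")
    case False
    moreover have "hermitian (Z + adj Z)" by (simp add: hermitian_def adj_add adj_adj add.commute)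
    moreover have "graph_generator H E c (Z + adj Z) = 0"
      by (simp add: graph_generator_add kernel kernel_adj)
    ultimately show ?thesis using that by blast
  next
    case True
    then have "adj Z = - Z" by (metis add.commute eq_neg_iff_add_eq_0)
    then have "hermitian (mscale \<i> Z)" by (simp add: hermitian_def adj_mscale vec_eq_iff mscale_entry)
    moreover have "mscale \<i> Z \<noteq> 0" using \<open>Z \<noteq> 0\<close> by (simp add: vec_eq_iff mscale_entry)
    moreover have "graph_generator H E c (mscale \<i> Z) = 0" by (simp add: graph_generator_mscale kernel)
    ultimately show ?thesis using that by blast
  qed
qed

lemma decay_map_positive_semidef_solution:
  assumes "hermitian H" "\<And>v. 0 < escape_rate E c v" "\<And>v. 0 \<le> r v"
  obtains Y where "positive_semidef Y" "decay_map H E c Y = - inflow E c (\<lambda>v. of_real (r v))"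
proof -
  obtain Y where Y: "decay_map H E c Y = - inflow E c (\<lambda>v. of_real (r v))"
    using surj_decay_map[OF assms(1,2)] by (metis surjD)
  then have "decay_map H E c (adj Y - Y) = 0"
    by (simp add: decay_map_diff decay_map_adj[OF assms(1)] adj_uminus inflow_adj)
  then have "adj Y - Y = 0" by (rule decay_map_eq_0_imp[OF assms(1,2)])
  then have "hermitian Y" by (simp add: hermitian_def)
  then have "positive_semidef Y"
    using positive_semidef_if_decay_map_eq_neg[OF assms(2) _ positive_semidef_inflow Y] assms(3) by blast
  then show ?thesis using that Y by blast
qed

lemma exists_stationary_density_of_positive_semidef:
  assumes "positive_semidef W" "W \<noteq> 0" "graph_generator H E c W = 0"
  shows "\<exists>\<rho>. density_matrix \<rho> \<and> graph_generator H E c \<rho> = 0"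
proof (intro exI conjI)
  show "density_matrix (mscale (of_real (1 / Re (trace W))) W)"
    using assms(1,2) by (rule density_matrix_normalize)
  show "graph_generator H E c (mscale (of_real (1 / Re (trace W))) W) = 0"
    by (simp add: graph_generator_mscale assms(3))
qed

text \<open>Starting from a Hermitian X in the kernel, solve for the positive part of its diagonal:
  the solution Y and Y - X are positive semidefinite, so diag Y lies above that positive part,
  and the trace identity forces equality; then Y and Y - X are stationary.\<close>
lemma exists_stationary_density:
  assumes "hermitian H" "\<And>v. 0 < escape_rate E c v"
  shows "\<exists>\<rho>. density_matrix \<rho> \<and> graph_generator H E c \<rho> = 0"
proof -
  obtain X where "hermitian X" "X \<noteq> 0" and X: "graph_generator H E c X = 0"
    using graph_generator_hermitian_kernel[OF assms(1)] by blast
  define p where "p v = Re (X $ v $ v)" for v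
  define p_pos where "p_pos v = max (p v) 0" for v
  have diag_X: "(\<lambda>v. X $ v $ v) = (\<lambda>v. of_real (p v))"
    using of_real_Re_diag_hermitian[OF \<open>hermitian X\<close>] by (auto simp: p_def)
  obtain Y where "positive_semidef Y" and Y: "decay_map H E c Y = - inflow E c (\<lambda>v. of_real (p_pos v))"
    using decay_map_positive_semidef_solution[OF assms, of p_pos] by (auto simp: p_pos_def)
  have "hermitian (Y - X)"
    using \<open>positive_semidef Y\<close> \<open>hermitian X\<close> by (simp add: positive_semidef_iff hermitian_def adj_diff)
  moreover have "positive_semidef (inflow E c (\<lambda>v. of_real (p_pos v - p v)))"
    by (intro positive_semidef_inflow) (simp add: p_pos_def)
  moreover have "decay_map H E c (Y - X) = - inflow E c (\<lambda>v. of_real (p_pos v - p v))"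
  proof -
    have "decay_map H E c X = - inflow E c (\<lambda>v. of_real (p v))"
      using X unfolding graph_generator_def diag_X by (simp add: eq_neg_iff_add_eq_0)
    moreover have "inflow E c (\<lambda>v. of_real (p_pos v - p v))
        = inflow E c (\<lambda>v. of_real (p_pos v)) - inflow E c (\<lambda>v. of_real (p v))"
      using inflow_diff[of E c "\<lambda>v. of_real (p_pos v)" "\<lambda>v. of_real (p v)"] by simp
    ultimately show ?thesis by (simp add: decay_map_diff Y)
  qed
  ultimately have "positive_semidef (Y - X)"
    by (rule positive_semidef_if_decay_map_eq_neg[OF assms(2)])
  define y where "y v = Re (Y $ v $ v)" for v
  have diag_Y: "(\<lambda>v. Y $ v $ v) = (\<lambda>v. of_real (y v))"
    using of_real_Re_diag_positive_semidef[OF \<open>positive_semidef Y\<close>] by (auto simp: y_def)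
  have below: "p_pos v \<le> y v" for v
    using positive_semidef_diag_nonneg[OF \<open>positive_semidef (Y - X)\<close>, of v]
      positive_semidef_diag_nonneg[OF \<open>positive_semidef Y\<close>, of v]
    by (simp add: p_pos_def y_def p_def)
  have sums: "(\<Sum>v\<in>UNIV. escape_rate E c v * p_pos v) = (\<Sum>v\<in>UNIV. escape_rate E c v * y v)"
  proof -
    have "trace (decay_map H E c Y) = trace (- inflow E c (\<lambda>v. of_real (p_pos v)))" using Y by simp
    then have "(of_real (\<Sum>v\<in>UNIV. escape_rate E c v * p_pos v) :: complex)
        = of_real (\<Sum>v\<in>UNIV. escape_rate E c v * y v)"
      unfolding trace_decay_map trace_uminus trace_inflow using diag_Y by (simp add: of_real_sum fun_eq_iff)
    then show ?thesis by (simp only: of_real_eq_iff)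
  qed
  have "p_pos v = y v" for v
    using sum_weighted_eq_imp_eq[of UNIV "escape_rate E c" p_pos y v] assms(2) below sums by simp
  then have "graph_generator H E c Y = 0" by (simp add: graph_generator_def diag_Y Y)
  moreover from this have "graph_generator H E c (Y - X) = 0" by (simp add: graph_generator_diff X)
  moreover have "Y \<noteq> 0 \<or> Y - X \<noteq> 0" using \<open>X \<noteq> 0\<close> by auto
  ultimately show ?thesis
    using exists_stationary_density_of_positive_semidef \<open>positive_semidef Y\<close>
      \<open>positive_semidef (Y - X)\<close> by blast
qed

lemma graph_generator_single_vertex:
  fixes E :: "('v::finite \<times> 'v) set"
  assumes "CARD('v) = 1"
  shows "graph_generator H E c X = 0"
proof -
  obtain x :: 'v where univ: "UNIV = {x}" using assms card_1_singletonE by blast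
  then have all: "v = x" for v :: 'v by auto
  have edges: "{e \<in> E. fst e = x} = E" "{e \<in> E. snd e = x} = E" using all by auto
  have "X $ fst e $ fst e = X $ x $ x" for e :: "'v \<times> 'v" using all[of "fst e"] by simp
  then have "inflow E c (\<lambda>v. X $ v $ v) $ x $ x = of_real (escape_rate E c x) * X $ x $ x"
    unfolding inflow_entry escape_rate_def edges of_real_sum sum_distrib_right by simp
  moreover have "decay_map H E c X $ x $ x = - of_real (escape_rate E c x) * X $ x $ x"
    by (simp add: decay_map_entry univ mult.commute)
  ultimately have "graph_generator H E c X $ x $ x = 0" by (simp add: graph_generator_def)
  then show ?thesis by (metis all vec_eq_iff zero_index)
qed

lemma density_matrix_single_vertex:
  assumes "CARD('v::finite) = 1"
  shows "density_matrix (\<rho> :: complex^'v^'v) \<longleftrightarrow> \<rho> = mat 1"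
proof -
  obtain x :: 'v where univ: "UNIV = {x}" using assms card_1_singletonE by blast
  then have all: "i = j" for i j :: 'v by (metis UNIV_I singletonD)
  have "density_matrix (mat 1 :: complex^'v^'v)"
    by (simp add: density_matrix_def positive_semidef_iff hermitian_def adj_mat quad_form_def cinner_self
        trace_I assms)
  moreover have "\<rho> = mat 1" if "trace \<rho> = 1"
  proof -
    have "\<rho> $ x $ x = 1" using that by (simp add: trace_def univ)
    then have "\<rho> $ i $ j = mat 1 $ i $ j" for i j
      using all[of i x] all[of j x] by (simp add: mat_def)
    then show ?thesis by (simp add: vec_eq_iff)
  qed
  ultimately show ?thesis by (auto simp: density_matrix_def)
qed

lemma graph_generator_relaxing:
  fixes E :: "('v::finite \<times> 'v) set"
  assumes "strongly_connected E" "\<forall>e\<in>E. c e \<noteq> 0" "hermitian H"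
  shows "(\<exists>!\<rho>. density_matrix \<rho> \<and> graph_generator H E c \<rho> = 0)
       \<and> (\<forall>\<rho>. density_matrix \<rho> \<and> graph_generator H E c \<rho> = 0 \<longrightarrow> rank \<rho> = CARD('v))"
proof (cases "CARD('v) = 1")
  case True
  have "rank (mat 1 :: complex^'v^'v) = CARD('v)" by (rule rank_eq_card_if_ker_trivial) simp
  then show ?thesis
    unfolding graph_generator_single_vertex[OF True] density_matrix_single_vertex[OF True] by auto
next
  case False
  then have "1 < CARD('v)" by (simp add: nat_neq_iff)
  note graph = assms(1,2) this
  obtain \<rho> where "density_matrix \<rho>" "graph_generator H E c \<rho> = 0"
    using exists_stationary_density[OF assms(3) escape_rate_pos[OF graph]] by blast
  moreover have "rank \<rho> = CARD('v)" if "density_matrix \<rho>" "graph_generator H E c \<rho> = 0" for \<rho>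
  proof (rule rank_eq_card_if_ker_trivial)
    have "\<rho> \<noteq> 0" using that(1) by (auto simp: density_matrix_def trace_def)
    then show "\<rho> *v x = 0 \<Longrightarrow> x = 0" for x
      using stationary_positive_semidef_ker_eq_0[OF graph _ that(2)] that(1) by (simp add: density_matrix_def)
  qed
  ultimately show ?thesis using stationary_density_unique[OF graph] by blast
qed

theorem theorem1:
  fixes E :: "('v::finite \<times> 'v) set"
    and c :: "'v \<times> 'v \<Rightarrow> complex"
    and H :: "complex^'v^'v"
  assumes "strongly_connected E"
    and "\<forall>e\<in>E. c e \<noteq> 0"
    and "hermitian H"
  shows "(\<exists>!\<rho>. density_matrix \<rho> \<and> gksl H E (\<lambda>(v, w). mscale (c (v, w)) (ketbra w v)) \<rho> = 0)
       \<and> (\<forall>\<rho>. density_matrix \<rho> \<and> gksl H E (\<lambda>(v, w). mscale (c (v, w)) (ketbra w v)) \<rho> = 0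
               \<longrightarrow> rank \<rho> = CARD('v))"
  unfolding gksl_graph_jumps using assms by (rule graph_generator_relaxing)

end
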